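(* There is a finite set $D$ and an infinite set $\Omega \subseteq \mathbf{W}_D$ of weightings such that $\mathrm{wPol}(\mathrm{Imp}(\Omega)) \neq \mathrm{wClone}(\Omega)$.
   Context: Let $\overline{\mathbb{Q}}=\mathbb{Q}\cup\{\infty\}$. An $m$-ary weighted relation on a finite set $D$ ($m\ge1$) is a map $\gamma:D^m\to\overline{\mathbb{Q}}$; $\mathbf{\Phi}_D$ denotes the set of all of them, and $\mathrm{Feas}(\gamma)=\{\mathbf{x}:\gamma(\mathbf{x})<\infty\}$. A $k$-ary operation is a map $f:D^k\to D$, applied to tuples coordinatewise; $f$ is a polymorphism of $\gamma$ if $f(\mathbf{x}_1,\dots,\mathbf{x}_k)\in\mathrm{Feas}(\gamma)$ whenever all $\mathbf{x}_i\in\mathrm{Feas}(\gamma)$; $\mathrm{Pol}(\Gamma)$ is the set of common polymorphisms of all $\gamma\in\Gamma$. Projections are $e^{(k)}_i(x_1,\dots,x_k)=x_i$. The superposition $f[g_1,\dots,g_k]$ of a $k$-ary $f$ with $\ell$-ary $g_i$ is $\mathbf{x}\mapsto f(g_1(\mathbf{x}),\dots,g_k(\mathbf{x}))$. A clone is a set of operations containing all projections and closed under superposition; $C^{(k)}$ denotes its $k$-ary members. A $k$-ary weighting of a clone $C$ is a function $\omega:C^{(k)}\to\mathbb{Q}$ with $\sum_{f\in C^{(k)}}\omega(f)=0$ and $\omega(f)<0$ only if $f$ is a projection. For $g_1,\dots,g_k\in C^{(\ell)}$, the superposition $\omega[g_1,\dots,g_k]:C^{(\ell)}\to\mathbb{Q}$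 is $\omega[g_1,\dots,g_k](f')=\sum_{f\in C^{(k)}:f[g_1,\dots,g_k]=f'}\omega(f)$; it is proper if it is again a weighting. A weighted clone is a non-empty set of weightings of a fixed clone $C$ closed under scaling by non-negative rationals, addition of weightings of equal arity, and proper superposition with operations of $C$. $\mathbf{W}_D$ is the set of all weightings of all clones on $D$. For $\Omega\subseteq\mathbf{W}_D$, extend each weighting by zeros to a weighting of the smallest clone containing all clones underlying members of $\Omega$; $\mathrm{wClone}(\Omega)$ is the smallest weighted clone containing these extended weightings. A $k$-ary weighting $\omega$ of a clone $C$ is a weighted polymorphism of $\gamma$ ($\gamma$ is improved by $\omega$) if $C\subseteq\mathrm{Pol}(\gamma)$ and for all $\mathbf{x}_1,\dots,\mathbf{x}_k\in\mathrm{Feas}(\gamma)$, $\sum_{f\in C^{(k)}}\omega(f)\gamma(f(\mathbf{x}_1,\dots,\mathbf{x}_k))\le0$. $\mathrm{Imp}(\Omega)$ is the set of weighted relations in $\mathbf{\Phi}_D$ improved by every $\omega\in\Omega$; for $\Gamma\subseteq\mathbf{\Phi}_D$, $\mathrm{wPol}(\Gamma)$ is the set of all weightings of the clone $\mathrm{Pol}(\Gamma)$ that are weighted polymorphisms of every $\gamma\in\Gamma$. *)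

theory Defs
  imports Complex_Main
begin

text \<open>Tuples in D^m are represented as lists of length m with entries in D.
An operation is a pair (k, f) with arity k >= 1 and f : D^k -> D; outside D^k the
function is normalised to undefined, so equality of operations is extensional on D^k.\<close>

type_synonym 'a operation = "nat \<times> ('a list \<Rightarrow> 'a)"

definition tuples_in :: "'a set \<Rightarrow> nat \<Rightarrow> 'a list \<Rightarrow> bool" where
  "tuples_in D m xs \<longleftrightarrow> length xs = m \<and> set xs \<subseteq> D"

definition is_op :: "'a set \<Rightarrow> 'a operation \<Rightarrow> bool" where
  "is_op D f \<longleftrightarrow> fst f \<ge> 1
     \<and> (\<forall>xs. tuples_in D (fst f) xs \<longrightarrow> snd f xs \<in> D)
     \<and> (\<forall>xs. \<not> tuples_in D (fst f) xs \<longrightarrow> snd f xs = undefined)"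

definition proj :: "'a set \<Rightarrow> nat \<Rightarrow> nat \<Rightarrow> 'a operation" where
  "proj D k i = (k, \<lambda>xs. if tuples_in D k xs then xs ! i else undefined)"

definition is_proj :: "'a set \<Rightarrow> 'a operation \<Rightarrow> bool" where
  "is_proj D f \<longleftrightarrow> (\<exists>i < fst f. f = proj D (fst f) i)"

definition superpos :: "'a set \<Rightarrow> 'a operation \<Rightarrow> 'a operation list \<Rightarrow> nat \<Rightarrow> 'a operation" where
  "superpos D f gs l = (l, \<lambda>xs. if tuples_in D l xs then snd f (map (\<lambda>g. snd g xs) gs) else undefined)"

definition ar :: "'a operation set \<Rightarrow> nat \<Rightarrow> 'a operation set" where
  "ar C k = {f \<in> C. fst f = k}"

definition clone :: "'a set \<Rightarrow> 'a operation set \<Rightarrow> bool" where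
  "clone D C \<longleftrightarrow> C \<subseteq> {f. is_op D f}
     \<and> (\<forall>k i. 1 \<le> k \<longrightarrow> i < k \<longrightarrow> proj D k i \<in> C)
     \<and> (\<forall>f\<in>C. \<forall>l\<ge>1. \<forall>gs. length gs = fst f \<longrightarrow> set gs \<subseteq> ar C l \<longrightarrow> superpos D f gs l \<in> C)"

definition clone_gen :: "'a set \<Rightarrow> 'a operation set \<Rightarrow> 'a operation set" where
  "clone_gen D S = \<Inter>{C. clone D C \<and> S \<subseteq> C}"

text \<open>A weighting is a triple (C, k, w): the underlying clone C, the arity k, and
w : C^(k) -> Q, extended by 0 outside C^(k).\<close>

type_synonym 'a weighting = "'a operation set \<times> nat \<times> ('a operation \<Rightarrow> rat)"

definition wclone :: "'a weighting \<Rightarrow> 'a operation set" where "wclone w = fst w"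
definition warity :: "'a weighting \<Rightarrow> nat" where "warity w = fst (snd w)"
definition wfun :: "'a weighting \<Rightarrow> 'a operation \<Rightarrow> rat" where "wfun w = snd (snd w)"

definition weighting :: "'a set \<Rightarrow> 'a weighting \<Rightarrow> bool" where
  "weighting D w \<longleftrightarrow> clone D (wclone w) \<and> warity w \<ge> 1
     \<and> (\<forall>f. wfun w f \<noteq> 0 \<longrightarrow> f \<in> ar (wclone w) (warity w))
     \<and> sum (wfun w) (ar (wclone w) (warity w)) = 0
     \<and> (\<forall>f. wfun w f < 0 \<longrightarrow> is_proj D f)"

definition wsuper :: "'a set \<Rightarrow> 'a weighting \<Rightarrow> 'a operation list \<Rightarrow> nat \<Rightarrow> 'a weighting" where
  "wsuper D w gs l = (wclone w, l, \<lambda>f'. if f' \<in> ar (wclone w) l then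
       (\<Sum>f\<in>{f \<in> ar (wclone w) (warity w). superpos D f gs l = f'}. wfun w f) else 0)"

definition weighted_clone :: "'a set \<Rightarrow> 'a weighting set \<Rightarrow> bool" where
  "weighted_clone D W \<longleftrightarrow> W \<noteq> {}
     \<and> (\<exists>C. \<forall>w\<in>W. weighting D w \<and> wclone w = C)
     \<and> (\<forall>w\<in>W. \<forall>c::rat. c \<ge> 0 \<longrightarrow> (wclone w, warity w, \<lambda>f. c * wfun w f) \<in> W)
     \<and> (\<forall>w\<in>W. \<forall>w'\<in>W. warity w = warity w' \<longrightarrow> (wclone w, warity w, \<lambda>f. wfun w f + wfun w' f) \<in> W)
     \<and> (\<forall>w\<in>W. \<forall>l\<ge>1. \<forall>gs. length gs = warity w \<longrightarrow> set gs \<subseteq> ar (wclone w) l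
           \<longrightarrow> weighting D (wsuper D w gs l) \<longrightarrow> wsuper D w gs l \<in> W)"

definition WD :: "'a set \<Rightarrow> 'a weighting set" where
  "WD D = {w. weighting D w}"

definition wClone :: "'a set \<Rightarrow> 'a weighting set \<Rightarrow> 'a weighting set" where
  "wClone D \<Omega> = (let C0 = clone_gen D (\<Union>w\<in>\<Omega>. wclone w);
                      E = (\<lambda>w. (C0, warity w, wfun w)) ` \<Omega>
                  in \<Inter>{W. weighted_clone D W \<and> (\<forall>w\<in>W. wclone w = C0) \<and> E \<subseteq> W})"

text \<open>An m-ary weighted relation is (m, g) with g : D^m -> Q \<union> {\<infinity>}, where None
represents \<infinity>; outside D^m, g is normalised to None.\<close>

type_synonym 'a wrel = "nat \<times> ('a list \<Rightarrow> rat option)"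

definition Phi :: "'a set \<Rightarrow> 'a wrel set" where
  "Phi D = {g. fst g \<ge> 1 \<and> (\<forall>xs. \<not> tuples_in D (fst g) xs \<longrightarrow> snd g xs = None)}"

definition Feas :: "'a set \<Rightarrow> 'a wrel \<Rightarrow> 'a list set" where
  "Feas D g = {xs. tuples_in D (fst g) xs \<and> snd g xs \<noteq> None}"

definition apply_op :: "'a operation \<Rightarrow> 'a list list \<Rightarrow> nat \<Rightarrow> 'a list" where
  "apply_op f xss m = map (\<lambda>j. snd f (map (\<lambda>x. x ! j) xss)) [0..<m]"

definition is_pol :: "'a set \<Rightarrow> 'a operation \<Rightarrow> 'a wrel \<Rightarrow> bool" where
  "is_pol D f g \<longleftrightarrow> (\<forall>xss. length xss = fst f \<longrightarrow> set xss \<subseteq> Feas D g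
       \<longrightarrow> apply_op f xss (fst g) \<in> Feas D g)"

definition Pol :: "'a set \<Rightarrow> 'a wrel set \<Rightarrow> 'a operation set" where
  "Pol D \<Gamma> = {f. is_op D f \<and> (\<forall>g\<in>\<Gamma>. is_pol D f g)}"

definition is_wpol :: "'a set \<Rightarrow> 'a weighting \<Rightarrow> 'a wrel \<Rightarrow> bool" where
  "is_wpol D w g \<longleftrightarrow> wclone w \<subseteq> Pol D {g}
     \<and> (\<forall>xss. length xss = warity w \<longrightarrow> set xss \<subseteq> Feas D g
          \<longrightarrow> (\<Sum>f\<in>ar (wclone w) (warity w). wfun w f * the (snd g (apply_op f xss (fst g)))) \<le> 0)"

definition Imp :: "'a set \<Rightarrow> 'a weighting set \<Rightarrow> 'a wrel set" where
  "Imp D \<Omega> = {g \<in> Phi D. \<forall>w\<in>\<Omega>. is_wpol D w g}"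

definition wPol :: "'a set \<Rightarrow> 'a wrel set \<Rightarrow> 'a weighting set" where
  "wPol D \<Gamma> = {w. weighting D w \<and> wclone w = Pol D \<Gamma> \<and> (\<forall>g\<in>\<Gamma>. is_wpol D w g)}"

end

theory Submission
  imports Defs "HOL-Library.FuncSet" "HOL-Library.Indicator_Function"
begin

text \<open>
  Take \<open>D = {0, 1, 2}\<close> and the unary weightings \<open>\<omega>\<^sub>t = ([h] - [id]) + t ([c\<^sub>2] - [id])\<close>
  for rational \<open>t > 0\<close>, where \<open>h\<close> sends 0 to 1 and fixes 1 and 2, and \<open>c\<^sub>2\<close> is constant 2.
  Each improvement inequality is affine in \<open>t\<close>, so every weighted relation improved by all
  \<open>\<omega>\<^sub>t\<close> is also improved by the limit \<open>\<omega>\<^sub>0\<close>; hence \<open>\<omega>\<^sub>0 \<in> wPol (Imp \<Omega>)\<close>.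
  On the other hand, the weightings improving the unary weighted relation
  \<open>[x \<noteq> 2] + \<epsilon> [x = 1]\<close> for all small \<open>\<epsilon> > 0\<close> form a weighted clone. It contains
  every \<open>\<omega>\<^sub>t\<close> with \<open>t > 0\<close>, but not \<open>\<omega>\<^sub>0\<close>: at \<open>x = 0\<close> the leading term of \<open>\<omega>\<^sub>0\<close>
  vanishes and the \<open>\<epsilon>\<close>-term is positive. Hence \<open>\<omega>\<^sub>0 \<notin> wClone \<Omega>\<close>.
\<close>

definition all_ops :: "'a set \<Rightarrow> 'a operation set" where
  "all_ops D = {f. is_op D f}"

lemma clone_all_ops: "clone D (all_ops D)"
  unfolding clone_def all_ops_def
proof (intro conjI allI impI ballI)
  fix k i :: nat assume "1 \<le> k" "i < k"
  then show "proj D k i \<in> {f. is_op D f}"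
    by (auto simp: is_op_def proj_def tuples_in_def)
next
  fix f l gs assume f: "f \<in> {f. is_op D f}" and l: "1 \<le> l" and gs: "length gs = fst f"
    and gs_ar: "set gs \<subseteq> ar {f. is_op D f} l"
  have "tuples_in D (fst f) (map (\<lambda>g. snd g xs) gs)" if "tuples_in D l xs" for xs
    using gs gs_ar that unfolding tuples_in_def ar_def is_op_def by auto
  then show "superpos D f gs l \<in> {f. is_op D f}"
    using f l unfolding superpos_def is_op_def by auto
qed auto

lemma clone_gen_clone: "clone D C \<Longrightarrow> clone_gen D C = C"
  unfolding clone_gen_def by blast

lemma finite_ar:
  assumes "finite D" and "C \<subseteq> all_ops D"
  shows "finite (ar C k)"
proof -
  define T where "T = {xs. tuples_in D k xs}"
  have "finite T"
    unfolding T_def tuples_in_def using finite_lists_length_eq[OF \<open>finite D\<close>]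
    by (simp add: conj_commute)
  define op_of :: "('a list \<Rightarrow> 'a) \<Rightarrow> 'a operation" where
    "op_of \<phi> = (k, \<lambda>xs. if xs \<in> T then \<phi> xs else undefined)" for \<phi>
  have "ar C k \<subseteq> op_of ` (T \<rightarrow>\<^sub>E D)"
  proof
    fix f assume "f \<in> ar C k"
    then have op: "is_op D f" and k: "fst f = k" using assms(2) by (auto simp: ar_def all_ops_def)
    have "restrict (snd f) T \<in> T \<rightarrow>\<^sub>E D" using op k by (auto simp: T_def is_op_def)
    moreover have "op_of (restrict (snd f) T) = f"
      using op k unfolding op_of_def T_def is_op_def by (cases f) (auto intro!: ext)
    ultimately show "f \<in> op_of ` (T \<rightarrow>\<^sub>E D)" by (metis image_eqI)
  qed
  moreover have "finite (op_of ` (T \<rightarrow>\<^sub>E D))"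
    using \<open>finite T\<close> \<open>finite D\<close> by (auto intro!: finite_PiE)
  ultimately show ?thesis by (rule finite_subset)
qed

lemma clone_finite_ar: "finite D \<Longrightarrow> clone D C \<Longrightarrow> finite (ar C k)"
  by (rule finite_ar) (auto simp: clone_def all_ops_def)

lemma tuples_in_map_ar:
  assumes "clone D C" and "set gs \<subseteq> ar C l" and "tuples_in D l zs"
  shows "tuples_in D (length gs) (map (\<lambda>g. snd g zs) gs)"
proof -
  have "is_op D g" if "g \<in> set gs" for g
    using assms(1,2) that unfolding clone_def ar_def by auto
  then show ?thesis
    using assms(2,3) unfolding tuples_in_def ar_def is_op_def by auto
qed

lemma weighting_zero: "clone D C \<Longrightarrow> weighting D (C, 1, \<lambda>_. 0)"
  by (simp add: weighting_def wclone_def warity_def wfun_def)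

lemma weighting_scale:
  assumes w: "weighting D w" and c: "c \<ge> 0"
  shows "weighting D (wclone w, warity w, \<lambda>f. c * wfun w f)"
  unfolding weighting_def wclone_def[of "(_, _, _)"] warity_def[of "(_, _, _)"]
    wfun_def[of "(_, _, _)"] fst_conv snd_conv
proof (intro conjI allI impI)
  show "clone D (wclone w)" "1 \<le> warity w" using w by (simp_all add: weighting_def)
  fix f
  show "f \<in> ar (wclone w) (warity w)" if "c * wfun w f \<noteq> 0"
    using w that unfolding weighting_def by (metis mult_zero_right)
  show "is_proj D f" if "c * wfun w f < 0"
    using w that c unfolding weighting_def by (metis mult_less_0_iff not_less)
next
  show "(\<Sum>f\<in>ar (wclone w) (warity w). c * wfun w f) = 0"
    using w by (simp add: weighting_def flip: sum_distrib_left)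
qed

lemma weighting_add:
  assumes w: "weighting D w" and w': "weighting D w'"
    and same: "wclone w = wclone w'" "warity w = warity w'"
  shows "weighting D (wclone w, warity w, \<lambda>f. wfun w f + wfun w' f)"
  unfolding weighting_def wclone_def[of "(_, _, _)"] warity_def[of "(_, _, _)"]
    wfun_def[of "(_, _, _)"] fst_conv snd_conv
proof (intro conjI allI impI)
  show "clone D (wclone w)" "1 \<le> warity w" using w by (simp_all add: weighting_def)
  fix f
  show "f \<in> ar (wclone w) (warity w)" if "wfun w f + wfun w' f \<noteq> 0"
  proof -
    from that have "wfun w f \<noteq> 0 \<or> wfun w' f \<noteq> 0" by auto
    then show ?thesis using w w' same unfolding weighting_def by metis
  qed
  show "is_proj D f" if "wfun w f + wfun w' f < 0"
  proof -
    from that have "wfun w f < 0 \<or> wfun w' f < 0" by linarith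
    then show ?thesis using w w' unfolding weighting_def by metis
  qed
next
  show "(\<Sum>f\<in>ar (wclone w) (warity w). wfun w f + wfun w' f) = 0"
    using w w' same by (simp add: weighting_def sum.distrib)
qed

definition wsum :: "('a \<Rightarrow> rat) \<Rightarrow> 'a weighting \<Rightarrow> 'a list \<Rightarrow> rat" where
  "wsum \<phi> w zs = (\<Sum>f\<in>ar (wclone w) (warity w). wfun w f * \<phi> (snd f zs))"

lemma wsum_scale: "wsum \<phi> (wclone w, warity w, \<lambda>f. c * wfun w f) zs = c * wsum \<phi> w zs"
  by (simp add: wsum_def wclone_def warity_def wfun_def sum_distrib_left mult.assoc)

lemma wsum_add:
  "wclone w = wclone w' \<Longrightarrow> warity w = warity w' \<Longrightarrow>
   wsum \<phi> (wclone w, warity w, \<lambda>f. wfun w f + wfun w' f) zs = wsum \<phi> w zs + wsum \<phi> w' zs"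
  by (simp add: wsum_def wclone_def warity_def wfun_def sum.distrib algebra_simps)

lemma wsum_wsuper:
  assumes "finite D" and C: "clone D C" and w: "wclone w = C" and l: "1 \<le> l"
    and gs: "length gs = warity w" "set gs \<subseteq> ar C l" and zs: "tuples_in D l zs"
  shows "wsum \<phi> (wsuper D w gs l) zs = wsum \<phi> w (map (\<lambda>g. snd g zs) gs)"
proof -
  let ?k = "warity w"
  let ?sp = "\<lambda>f. superpos D f gs l"
  have fin: "finite (ar C n)" for n using clone_finite_ar[OF \<open>finite D\<close> C] .
  have sp_ar: "?sp ` ar C ?k \<subseteq> ar C l"
    using C gs l unfolding clone_def ar_def by (auto simp: superpos_def)
  have "wsum \<phi> (wsuper D w gs l) zs =
      (\<Sum>f'\<in>ar C l. (\<Sum>f\<in>{f \<in> ar C ?k. ?sp f = f'}. wfun w f) * \<phi> (snd f' zs))"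
    unfolding wsum_def wsuper_def using w by (simp add: wclone_def warity_def wfun_def)
  also have "\<dots> = (\<Sum>f'\<in>ar C l. \<Sum>f\<in>{f \<in> ar C ?k. ?sp f = f'}. wfun w f * \<phi> (snd (?sp f) zs))"
    by (intro sum.cong refl) (auto simp: sum_distrib_right)
  also have "\<dots> = (\<Sum>f\<in>ar C ?k. wfun w f * \<phi> (snd (?sp f) zs))"
    by (rule sum.group[OF fin fin sp_ar])
  also have "\<dots> = wsum \<phi> w (map (\<lambda>g. snd g zs) gs)"
    unfolding wsum_def w using zs by (intro sum.cong refl) (simp add: superpos_def)
  finally show ?thesis .
qed

definition lex_nonpos :: "rat \<Rightarrow> rat \<Rightarrow> bool" where
  "lex_nonpos a b \<longleftrightarrow> a < 0 \<or> (a = 0 \<and> b \<le> 0)"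

lemma lex_nonpos_scale: "lex_nonpos a b \<Longrightarrow> c \<ge> 0 \<Longrightarrow> lex_nonpos (c * a) (c * b)"
  unfolding lex_nonpos_def by (cases "c = 0") (auto simp: mult_pos_neg mult_nonneg_nonpos)

lemma lex_nonpos_add: "lex_nonpos a b \<Longrightarrow> lex_nonpos a' b' \<Longrightarrow> lex_nonpos (a + a') (b + b')"
  unfolding lex_nonpos_def by auto

text \<open>The weightings of C that improve the unary weighted relation \<open>\<phi> + \<epsilon> \<psi>\<close>
  for all sufficiently small \<open>\<epsilon> > 0\<close>.\<close>

definition lex_improving :: "'a set \<Rightarrow> 'a operation set \<Rightarrow> ('a \<Rightarrow> rat) \<Rightarrow> ('a \<Rightarrow> rat) \<Rightarrow> 'a weighting set" where
  "lex_improving D C \<phi> \<psi> = {w. weighting D w \<and> wclone w = C \<and>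
     (\<forall>zs. tuples_in D (warity w) zs \<longrightarrow> lex_nonpos (wsum \<phi> w zs) (wsum \<psi> w zs))}"

lemma weighted_clone_lex_improving:
  assumes "finite D" and C: "clone D C"
  shows "weighted_clone D (lex_improving D C \<phi> \<psi>)"
  unfolding weighted_clone_def
proof (intro conjI ballI allI impI)
  have "wsum \<phi> (C, 1, \<lambda>_. 0) zs = 0" for \<phi> zs by (simp add: wsum_def wfun_def)
  then have "(C, 1, \<lambda>_. 0) \<in> lex_improving D C \<phi> \<psi>"
    using weighting_zero[OF C] by (simp add: lex_improving_def lex_nonpos_def wclone_def)
  then show "lex_improving D C \<phi> \<psi> \<noteq> {}" by blast
  show "\<exists>C'. \<forall>w\<in>lex_improving D C \<phi> \<psi>. weighting D w \<and> wclone w = C'"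
    by (auto simp: lex_improving_def)
next
  fix w and c :: rat assume w: "w \<in> lex_improving D C \<phi> \<psi>" and "0 \<le> c"
  then show "(wclone w, warity w, \<lambda>f. c * wfun w f) \<in> lex_improving D C \<phi> \<psi>"
    by (auto simp: lex_improving_def weighting_scale wsum_scale lex_nonpos_scale
        wclone_def[of "(_, _, _)"] warity_def[of "(_, _, _)"])
next
  fix w w' assume w: "w \<in> lex_improving D C \<phi> \<psi>" and w': "w' \<in> lex_improving D C \<phi> \<psi>"
    and same_arity: "warity w = warity w'"
  then have same_clone: "wclone w = wclone w'" by (simp add: lex_improving_def)
  show "(wclone w, warity w, \<lambda>f. wfun w f + wfun w' f) \<in> lex_improving D C \<phi> \<psi>"
  proof -
    have "weighting D (wclone w, warity w, \<lambda>f. wfun w f + wfun w' f)"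
      using w w' weighting_add[OF _ _ same_clone same_arity] by (simp add: lex_improving_def)
    moreover have "lex_nonpos (wsum \<phi> w zs + wsum \<phi> w' zs) (wsum \<psi> w zs + wsum \<psi> w' zs)"
      if "tuples_in D (warity w) zs" for zs
      using w w' that same_arity by (intro lex_nonpos_add) (auto simp: lex_improving_def)
    ultimately show ?thesis
      using w unfolding lex_improving_def mem_Collect_eq wsum_add[OF same_clone same_arity]
      by (simp add: wclone_def[of "(_, _, _)"] warity_def[of "(_, _, _)"])
  qed
next
  fix w l gs assume w: "w \<in> lex_improving D C \<phi> \<psi>" and l: "1 \<le> l"
    and gs: "length gs = warity w" "set gs \<subseteq> ar (wclone w) l"
    and super: "weighting D (wsuper D w gs l)"
  have wC: "wclone w = C" using w by (simp add: lex_improving_def)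
  have "lex_nonpos (wsum \<phi> (wsuper D w gs l) zs) (wsum \<psi> (wsuper D w gs l) zs)"
    if zs: "tuples_in D l zs" for zs
  proof -
    have "tuples_in D (warity w) (map (\<lambda>g. snd g zs) gs)"
      using tuples_in_map_ar[OF C gs(2)[unfolded wC] zs] gs(1) by simp
    then show ?thesis
      using w wsum_wsuper[OF \<open>finite D\<close> C wC l gs(1) gs(2)[unfolded wC] zs]
      by (simp add: lex_improving_def)
  qed
  then show "wsuper D w gs l \<in> lex_improving D C \<phi> \<psi>"
    using super wC by (simp add: lex_improving_def wsuper_def wclone_def warity_def)
qed

lemma wClone_subset_weighted_clone:
  assumes "weighted_clone D W"
    and "\<forall>w\<in>W. wclone w = C" and "clone_gen D (\<Union>w\<in>\<Omega>. wclone w) = C"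
    and "\<And>w. w \<in> \<Omega> \<Longrightarrow> (C, warity w, wfun w) \<in> W"
  shows "wClone D \<Omega> \<subseteq> W"
  unfolding wClone_def Let_def using assms by (intro Inter_lower) auto

lemma nonpos_of_perturbations_nonpos:
  fixes a b :: rat
  assumes "\<And>t. t > 0 \<Longrightarrow> a + t * b \<le> 0"
  shows "a \<le> 0"
proof (rule ccontr)
  assume "\<not> a \<le> 0"
  define t where "t = a / (2 * (\<bar>b\<bar> + 1))"
  have "t > 0" using \<open>\<not> a \<le> 0\<close> by (simp add: t_def add_pos_nonneg)
  have "t * \<bar>b\<bar> \<le> a / 2"
    using \<open>\<not> a \<le> 0\<close> by (simp add: t_def field_simps)
  moreover have "- (t * \<bar>b\<bar>) \<le> t * b"
    using abs_ge_minus_self[of "t * b"] \<open>t > 0\<close> by (simp add: abs_mult)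
  ultimately have "a + t * b > 0" using \<open>\<not> a \<le> 0\<close> by linarith
  then show False using assms[OF \<open>t > 0\<close>] by simp
qed

lemma is_wpol_limit:
  assumes "\<And>t. t > 0 \<Longrightarrow> is_wpol D (C, k, \<lambda>f. u f + t * v f) g"
  shows "is_wpol D (C, k, u) g"
  unfolding is_wpol_def wclone_def[of "(_, _, _)"] warity_def[of "(_, _, _)"]
    wfun_def[of "(_, _, _)"] fst_conv snd_conv
proof (intro conjI allI impI)
  show "C \<subseteq> Pol D {g}"
    using assms[of 1] by (simp add: is_wpol_def wclone_def)
  fix xss :: "'a list list" assume "length xss = k" "set xss \<subseteq> Feas D g"
  define F where "F f = the (snd g (apply_op f xss (fst g)))" for f
  have "(\<Sum>f\<in>ar C k. u f * F f) + t * (\<Sum>f\<in>ar C k. v f * F f) \<le> 0" if "t > 0" for t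
  proof -
    have "(\<Sum>f\<in>ar C k. (u f + t * v f) * F f) \<le> 0"
      using assms[OF that] \<open>length xss = k\<close> \<open>set xss \<subseteq> Feas D g\<close>
      by (simp add: is_wpol_def F_def wclone_def warity_def wfun_def)
    then show ?thesis
      by (simp add: sum.distrib sum_distrib_left distrib_right mult.assoc)
  qed
  then show "(\<Sum>f\<in>ar C k. u f * the (snd g (apply_op f xss (fst g)))) \<le> 0"
    unfolding F_def[symmetric] by (rule nonpos_of_perturbations_nonpos)
qed

lemma Pol_Imp_all_ops:
  assumes "w \<in> \<Omega>" and "wclone w = all_ops D"
  shows "Pol D (Imp D \<Omega>) = all_ops D"
proof
  show "Pol D (Imp D \<Omega>) \<subseteq> all_ops D" by (auto simp: Pol_def all_ops_def)
  have "all_ops D \<subseteq> Pol D {g}" if "g \<in> Imp D \<Omega>" for g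
    using assms that by (auto simp: Imp_def is_wpol_def)
  then show "all_ops D \<subseteq> Pol D (Imp D \<Omega>)" by (auto simp: Pol_def all_ops_def)
qed

definition unary_op :: "'a set \<Rightarrow> ('a \<Rightarrow> 'a) \<Rightarrow> 'a operation" where
  "unary_op D \<phi> = (1, \<lambda>xs. if tuples_in D 1 xs then \<phi> (xs ! 0) else undefined)"

lemma unary_op_apply: "x \<in> D \<Longrightarrow> snd (unary_op D \<phi>) [x] = \<phi> x"
  by (simp add: unary_op_def tuples_in_def)

lemma unary_op_in_ar: "\<phi> ` D \<subseteq> D \<Longrightarrow> unary_op D \<phi> \<in> ar (all_ops D) 1"
  by (auto simp: unary_op_def ar_def all_ops_def is_op_def tuples_in_def length_Suc_conv)

lemma is_proj_unary_op_id: "is_proj D (unary_op D (\<lambda>x. x))"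
  unfolding is_proj_def by (auto simp: unary_op_def proj_def)

definition shift :: "'a set \<Rightarrow> ('a \<Rightarrow> 'a) \<Rightarrow> 'a operation \<Rightarrow> rat" where
  "shift D \<phi> f = of_bool (f = unary_op D \<phi>) - of_bool (f = unary_op D (\<lambda>x. x))"

lemma sum_shift_weighted:
  assumes "finite D" and "\<phi> ` D \<subseteq> D" and "x \<in> D"
  shows "(\<Sum>f\<in>ar (all_ops D) 1. shift D \<phi> f * \<psi> (snd f [x])) = \<psi> (\<phi> x) - \<psi> x"
proof -
  let ?A = "ar (all_ops D) 1"
  let ?at = "\<lambda>h f. if f = h then \<psi> (snd f [x]) else 0"
  have "unary_op D \<phi> \<in> ?A" "unary_op D (\<lambda>x. x) \<in> ?A"
    using assms(2) unary_op_in_ar[of \<phi> D] unary_op_in_ar[of "\<lambda>x. x" D] by auto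
  moreover have "shift D \<phi> f * \<psi> (snd f [x]) = ?at (unary_op D \<phi>) f - ?at (unary_op D (\<lambda>x. x)) f" for f
    by (simp add: shift_def)
  ultimately show ?thesis
    using finite_ar[OF \<open>finite D\<close>, of "all_ops D" 1] \<open>x \<in> D\<close>
    by (simp add: sum_subtractf unary_op_apply)
qed

lemma sum_shift:
  assumes "finite D" and "\<phi> ` D \<subseteq> D"
  shows "(\<Sum>f\<in>ar (all_ops D) 1. shift D \<phi> f) = 0"
proof -
  have "unary_op D \<phi> \<in> ar (all_ops D) 1" "unary_op D (\<lambda>x. x) \<in> ar (all_ops D) 1"
    using assms(2) unary_op_in_ar[of \<phi> D] unary_op_in_ar[of "\<lambda>x. x" D] by auto
  then show ?thesis
    using finite_ar[OF \<open>finite D\<close>, of "all_ops D" 1] by (simp add: shift_def of_bool_def sum_subtractf)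
qed

lemma shift_negD: "shift D \<phi> f < 0 \<Longrightarrow> f = unary_op D (\<lambda>x. x)"
  by (auto simp: shift_def)

lemma shift_nonzeroD: "shift D \<phi> f \<noteq> 0 \<Longrightarrow> f = unary_op D \<phi> \<or> f = unary_op D (\<lambda>x. x)"
  by (auto simp: shift_def)

lemma weighting_shift_combination:
  assumes "finite D" and "\<phi> ` D \<subseteq> D" and "\<psi> ` D \<subseteq> D" and "t \<ge> 0"
  shows "weighting D (all_ops D, 1, \<lambda>f. shift D \<phi> f + t * shift D \<psi> f)"
  unfolding weighting_def wclone_def warity_def wfun_def fst_conv snd_conv
proof (intro conjI allI impI)
  show "clone D (all_ops D)" by (rule clone_all_ops)
  fix f
  show "f \<in> ar (all_ops D) 1" if "shift D \<phi> f + t * shift D \<psi> f \<noteq> 0"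
  proof -
    from that have "shift D \<phi> f \<noteq> 0 \<or> shift D \<psi> f \<noteq> 0" by auto
    then have "f = unary_op D \<phi> \<or> f = unary_op D \<psi> \<or> f = unary_op D (\<lambda>x. x)"
      using shift_nonzeroD by blast
    then show ?thesis
      using assms(2,3) unary_op_in_ar[of \<phi> D] unary_op_in_ar[of \<psi> D] unary_op_in_ar[of "\<lambda>x. x" D]
      by auto
  qed
  show "is_proj D f" if "shift D \<phi> f + t * shift D \<psi> f < 0"
  proof -
    from that \<open>t \<ge> 0\<close> have "shift D \<phi> f < 0 \<or> shift D \<psi> f < 0"
      by (meson add_nonneg_nonneg mult_nonneg_nonneg not_less)
    then show ?thesis using shift_negD is_proj_unary_op_id by metis
  qed
next
  show "(\<Sum>f\<in>ar (all_ops D) 1. shift D \<phi> f + t * shift D \<psi> f) = 0"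
    using sum_shift[OF assms(1,2)] sum_shift[OF assms(1,3)]
    by (simp add: sum.distrib flip: sum_distrib_left)
qed simp

definition dom3 :: "nat set" where
  "dom3 = {0, 1, 2}"

definition omega :: "rat \<Rightarrow> nat weighting" where
  "omega t = (all_ops dom3, 1,
     \<lambda>f. shift dom3 (\<lambda>x. if x = 2 then 2 else 1) f + t * shift dom3 (\<lambda>_. 2) f)"

lemma weighting_omega: "t \<ge> 0 \<Longrightarrow> weighting dom3 (omega t)"
  unfolding omega_def by (rule weighting_shift_combination) (auto simp: dom3_def)

lemma wsum_omega:
  assumes "x \<in> dom3"
  shows "wsum \<phi> (omega t) [x] = \<phi> (if x = 2 then 2 else 1) - \<phi> x + t * (\<phi> 2 - \<phi> x)"
proof -
  have maps: "(\<lambda>x. if x = 2 then 2 else 1) ` dom3 \<subseteq> dom3" "(\<lambda>_. 2) ` dom3 \<subseteq> dom3"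
    by (auto simp: dom3_def)
  have "wsum \<phi> (omega t) [x] =
      (\<Sum>f\<in>ar (all_ops dom3) 1. shift dom3 (\<lambda>x. if x = 2 then 2 else 1) f * \<phi> (snd f [x]))
      + t * (\<Sum>f\<in>ar (all_ops dom3) 1. shift dom3 (\<lambda>_. 2) f * \<phi> (snd f [x]))"
    by (simp add: wsum_def omega_def wclone_def warity_def wfun_def distrib_right sum.distrib
        sum_distrib_left mult.assoc)
  then show ?thesis
    using sum_shift_weighted[OF _ maps(1) assms] sum_shift_weighted[OF _ maps(2) assms]
    by (simp add: dom3_def)
qed

abbreviation lex_improving_omega :: "nat weighting set" where
  "lex_improving_omega \<equiv> lex_improving dom3 (all_ops dom3) (indicator {0, 1}) (indicator {1})"

lemma omega_lex_improving: "t > 0 \<Longrightarrow> omega t \<in> lex_improving_omega"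
  unfolding lex_improving_def
proof (intro CollectI conjI allI impI)
  assume "t > 0"
  then show "weighting dom3 (omega t)" by (intro weighting_omega) simp
  show "wclone (omega t) = all_ops dom3" by (simp add: omega_def wclone_def)
  fix zs assume "tuples_in dom3 (warity (omega t)) zs"
  then obtain x where "zs = [x]" "x \<in> dom3"
    by (auto simp: omega_def warity_def tuples_in_def length_Suc_conv)
  then show "lex_nonpos (wsum (indicator {0, 1}) (omega t) zs) (wsum (indicator {1}) (omega t) zs)"
    using \<open>t > 0\<close> by (auto simp: wsum_omega dom3_def lex_nonpos_def)
qed

lemma omega_0_not_lex_improving: "omega 0 \<notin> lex_improving_omega"
proof
  assume "omega 0 \<in> lex_improving_omega"
  moreover have "tuples_in dom3 (warity (omega 0)) [0]"
    by (simp add: omega_def warity_def tuples_in_def dom3_def)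
  ultimately have "lex_nonpos (wsum (indicator {0, 1}) (omega 0) [0]) (wsum (indicator {1}) (omega 0) [0])"
    by (simp add: lex_improving_def)
  then show False by (simp add: wsum_omega dom3_def lex_nonpos_def)
qed

lemma inj_on_omega: "inj_on omega {0<..}"
proof (rule inj_onI)
  fix s t assume "omega s = omega t"
  then have "wsum (indicator {2}) (omega s) [0] = wsum (indicator {2}) (omega t) [0]" by simp
  then show "s = t" by (simp add: wsum_omega dom3_def)
qed

lemma omega_0_in_wPol: "omega 0 \<in> wPol dom3 (Imp dom3 (omega ` {0<..}))"
proof -
  have "omega 1 \<in> omega ` {0<..}" by (rule imageI) simp
  then have Pol_eq: "Pol dom3 (Imp dom3 (omega ` {0<..})) = all_ops dom3"
    by (rule Pol_Imp_all_ops) (simp add: omega_def wclone_def)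
  have "is_wpol dom3 (omega 0) g" if "g \<in> Imp dom3 (omega ` {0<..})" for g
  proof -
    have "is_wpol dom3 (omega t) g" if "t > 0" for t
      using \<open>g \<in> Imp dom3 (omega ` {0<..})\<close> that by (simp add: Imp_def)
    then have "is_wpol dom3 (all_ops dom3, 1, shift dom3 (\<lambda>x. if x = 2 then 2 else 1)) g"
      unfolding omega_def by (rule is_wpol_limit)
    then show ?thesis by (simp add: omega_def)
  qed
  then show ?thesis
    using weighting_omega[of 0] unfolding wPol_def Pol_eq by (simp add: omega_def wclone_def)
qed

lemma wClone_omega_subset: "wClone dom3 (omega ` {0<..}) \<subseteq> lex_improving_omega"
proof (rule wClone_subset_weighted_clone)
  show "weighted_clone dom3 lex_improving_omega"
    by (rule weighted_clone_lex_improving) (simp_all add: dom3_def clone_all_ops)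
  show "\<forall>w\<in>lex_improving_omega. wclone w = all_ops dom3" by (simp add: lex_improving_def)
  show "clone_gen dom3 (\<Union>w\<in>omega ` {0<..}. wclone w) = all_ops dom3"
    using clone_gen_clone[OF clone_all_ops] by (simp add: omega_def wclone_def)
  show "(all_ops dom3, warity w, wfun w) \<in> lex_improving_omega" if "w \<in> omega ` {0<..}" for w
    using that omega_lex_improving by (auto simp: omega_def warity_def wfun_def)
qed

theorem lemma2:
  shows "\<exists>(D :: nat set) \<Omega>. finite D \<and> \<Omega> \<subseteq> WD D \<and> infinite \<Omega> \<and> wPol D (Imp D \<Omega>) \<noteq> wClone D \<Omega>"
proof (intro exI conjI)
  show "finite dom3" by (simp add: dom3_def)
  show "omega ` {0<..} \<subseteq> WD dom3" using weighting_omega by (auto simp: WD_def)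
  show "infinite (omega ` {0<..})"
    using finite_imageD[OF _ inj_on_omega] infinite_Ioi by blast
  show "wPol dom3 (Imp dom3 (omega ` {0<..})) \<noteq> wClone dom3 (omega ` {0<..})"
    using omega_0_in_wPol omega_0_not_lex_improving wClone_omega_subset by blast
qed

end
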